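(* $\mathbf{K4}^{\nabla\bullet}$ is strongly complete with respect to the class of transitive frames: for every set $\Gamma\cup\{\phi\}\subseteq\mathcal{L}(\nabla,\bullet)$, if for every Kripke model $\mathcal{M}$ with transitive accessibility relation and every state $s$, $\mathcal{M},s\vDash\Gamma$ implies $\mathcal{M},s\vDash\phi$, then $\Gamma\vdash_{\mathbf{K4}^{\nabla\bullet}}\phi$.
   Context: $\mathcal{L}(\nabla,\bullet)$: $\phi::=p\mid\neg\phi\mid\phi\land\phi\mid\nabla\phi\mid\bullet\phi$ over a nonempty set $\mathbf{P}$ of propositional variables; $\Delta\phi:=\neg\nabla\phi$, $\circ\phi:=\neg\bullet\phi$. Kripke models $\langle S,R,V\rangle$: $s\vDash\nabla\phi$ iff there are $t,u$ with $sRt$, $sRu$, $t\vDash\phi$, $u\nvDash\phi$; $s\vDash\bullet\phi$ iff $s\vDash\phi$ and there is $t$ with $sRt$, $t\nvDash\phi$. The Hilbert system $\mathbf{K}^{\nabla\bullet}$ has axioms: A0 all propositional tautologies; A1 $\bullet\phi\to\phi$; A2 $\nabla\phi\leftrightarrow\nabla\neg\phi$; A3 $\bullet(\psi\to\phi)\land\phi\to\bullet\phi$; A4 $\nabla(\phi\land\psi)\to\nabla\phi\vee\nabla\psi$; A5 $\bullet(\phi\land\psi)\to\bullet\phi\vee\bullet\psi$; A6 $\nabla\phi\to\bullet\phi\vee\bullet\neg\phi$; A7 $\bullet(\phi\to\psi)\land\bullet(\neg\phi\to\chi)\to\nabla\phi$; rules R1 $\phi/\Delta\phi$; R2 $\phi/\circ\phi$;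 R3 $\phi\leftrightarrow\psi/\Delta\phi\leftrightarrow\Delta\psi$; R4 $\phi\leftrightarrow\psi/\circ\phi\leftrightarrow\circ\psi$; MP. $\mathbf{K4}^{\nabla\bullet}$ adds the axiom schemas A4-1 $\Delta\phi\to\Delta\Delta\phi$; A4-2 $\Delta\phi\to\circ(\psi\to\Delta\phi)$; A4-3 $\bullet\psi_1\land\Delta\phi\land\circ(\neg\psi_1\to\phi)\to\Delta\circ(\neg\psi_2\to\phi)$; A4-4 $\bullet\psi_1\land\Delta\phi\land\circ(\neg\psi_1\to\phi)\to\circ(\neg\psi_1\to\circ(\neg\psi_2\to\phi))$. $\Gamma\vdash\phi$ means $\vdash(\gamma_1\land\dots\land\gamma_n)\to\phi$ for some finite subset of $\Gamma$. *)

theory Defs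
  imports Main
begin

datatype 'p form =
    Atom 'p
  | Neg "'p form"
  | Conj "'p form" "'p form"
  | Nabla "'p form"
  | Bullet "'p form"

definition Imp :: "'p form \<Rightarrow> 'p form \<Rightarrow> 'p form" where
  "Imp a b = Neg (Conj a (Neg b))"

definition Disj :: "'p form \<Rightarrow> 'p form \<Rightarrow> 'p form" where
  "Disj a b = Neg (Conj (Neg a) (Neg b))"

definition Iff :: "'p form \<Rightarrow> 'p form \<Rightarrow> 'p form" where
  "Iff a b = Conj (Imp a b) (Imp b a)"

definition Delta :: "'p form \<Rightarrow> 'p form" where
  "Delta a = Neg (Nabla a)"

definition Circ :: "'p form \<Rightarrow> 'p form" where
  "Circ a = Neg (Bullet a)"

fun sat :: "'s set \<Rightarrow> ('s \<Rightarrow> 's \<Rightarrow> bool) \<Rightarrow> ('p \<Rightarrow> 's set) \<Rightarrow> 's \<Rightarrow> 'p form \<Rightarrow> bool" where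
  "sat S R V s (Atom p) = (s \<in> V p)"
| "sat S R V s (Neg a) = (\<not> sat S R V s a)"
| "sat S R V s (Conj a b) = (sat S R V s a \<and> sat S R V s b)"
| "sat S R V s (Nabla a) =
     (\<exists>t\<in>S. \<exists>u\<in>S. R s t \<and> R s u \<and> sat S R V t a \<and> \<not> sat S R V u a)"
| "sat S R V s (Bullet a) =
     (sat S R V s a \<and> (\<exists>t\<in>S. R s t \<and> \<not> sat S R V t a))"

definition is_model :: "'s set \<Rightarrow> ('s \<Rightarrow> 's \<Rightarrow> bool) \<Rightarrow> ('p \<Rightarrow> 's set) \<Rightarrow> bool" where
  "is_model S R V \<longleftrightarrow> S \<noteq> {} \<and> (\<forall>s t. R s t \<longrightarrow> s \<in> S \<and> t \<in> S) \<and> (\<forall>p. V p \<subseteq> S)"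

definition transitive_rel :: "'s set \<Rightarrow> ('s \<Rightarrow> 's \<Rightarrow> bool) \<Rightarrow> bool" where
  "transitive_rel S R \<longleftrightarrow> (\<forall>s\<in>S. \<forall>t\<in>S. \<forall>u\<in>S. R s t \<longrightarrow> R t u \<longrightarrow> R s u)"

fun peval :: "('p form \<Rightarrow> bool) \<Rightarrow> 'p form \<Rightarrow> bool" where
  "peval v (Atom p) = v (Atom p)"
| "peval v (Neg a) = (\<not> peval v a)"
| "peval v (Conj a b) = (peval v a \<and> peval v b)"
| "peval v (Nabla a) = v (Nabla a)"
| "peval v (Bullet a) = v (Bullet a)"

definition tautology :: "'p form \<Rightarrow> bool" where
  "tautology a \<longleftrightarrow> (\<forall>v. peval v a)"

inductive K4 :: "'p form \<Rightarrow> bool" where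
  A0: "tautology a \<Longrightarrow> K4 a"
| A1: "K4 (Imp (Bullet a) a)"
| A2: "K4 (Iff (Nabla a) (Nabla (Neg a)))"
| A3: "K4 (Imp (Conj (Bullet (Imp b a)) a) (Bullet a))"
| A4: "K4 (Imp (Nabla (Conj a b)) (Disj (Nabla a) (Nabla b)))"
| A5: "K4 (Imp (Bullet (Conj a b)) (Disj (Bullet a) (Bullet b)))"
| A6: "K4 (Imp (Nabla a) (Disj (Bullet a) (Bullet (Neg a))))"
| A7: "K4 (Imp (Conj (Bullet (Imp a b)) (Bullet (Imp (Neg a) c))) (Nabla a))"
| A4_1: "K4 (Imp (Delta a) (Delta (Delta a)))"
| A4_2: "K4 (Imp (Delta a) (Circ (Imp b (Delta a))))"
| A4_3: "K4 (Imp (Conj (Conj (Bullet b1) (Delta a)) (Circ (Imp (Neg b1) a)))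
                 (Delta (Circ (Imp (Neg b2) a))))"
| A4_4: "K4 (Imp (Conj (Conj (Bullet b1) (Delta a)) (Circ (Imp (Neg b1) a)))
                 (Circ (Imp (Neg b1) (Circ (Imp (Neg b2) a)))))"
| R1: "K4 a \<Longrightarrow> K4 (Delta a)"
| R2: "K4 a \<Longrightarrow> K4 (Circ a)"
| R3: "K4 (Iff a b) \<Longrightarrow> K4 (Iff (Delta a) (Delta b))"
| R4: "K4 (Iff a b) \<Longrightarrow> K4 (Iff (Circ a) (Circ b))"
| MP: "K4 (Imp a b) \<Longrightarrow> K4 a \<Longrightarrow> K4 b"

definition derives :: "'p form set \<Rightarrow> 'p form \<Rightarrow> bool" where
  "derives G a \<longleftrightarrow> K4 a \<or>
     (\<exists>g gs. set (g # gs) \<subseteq> G \<and> K4 (Imp (fold (\<lambda>x y. Conj y x) gs g) a))"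

end

theory Submission
  imports Defs
begin

text \<open>The states are the maximal consistent sets, and G sees D
  when, for some \<psi> with \<bullet>\<psi> \<in> G, the set D contains the core
  {a. \<Delta>a \<in> G \<and> \<circ>(\<not>\<psi> \<rightarrow> a) \<in> G} of G. Semantically the core consists of the formulas
  true at every successor: \<bullet>\<psi> provides a successor refuting \<psi>, where \<not>\<psi> \<rightarrow> a forces a,
  and \<Delta>a spreads a to all successors. By A5 and A7 the core does not depend on \<psi>, which
  together with A2, A4 and A6 gives the truth lemma for \<nabla>; A1 and A3 handle \<bullet>. The axioms
  A4-1 to A4-4 say that the core is closed under a \<mapsto> \<Delta>a and a \<mapsto> \<circ>(\<not>\<chi> \<rightarrow> a), which is
  exactly transitivity of the canonical relation.\<close>

definition Verum :: "'p form" where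
  "Verum = Neg (Conj (Atom undefined) (Neg (Atom undefined)))"

fun conj_list :: "'p form list \<Rightarrow> 'p form" where
  "conj_list [] = Verum"
| "conj_list (a # as) = Conj a (conj_list as)"

lemma peval_conj_list [simp]: "peval v (conj_list as) \<longleftrightarrow> (\<forall>a\<in>set as. peval v a)"
  by (induction as) (auto simp: Verum_def)

lemma peval_fold_Conj [simp]:
  "peval v (fold (\<lambda>x y. Conj y x) as a) \<longleftrightarrow> peval v a \<and> (\<forall>x\<in>set as. peval v x)"
  by (induction as arbitrary: a) auto

lemmas tautology_defs = tautology_def Imp_def Iff_def Disj_def Delta_def Circ_def Verum_def

lemma K4_tautological_mp: "K4 a \<Longrightarrow> tautology (Imp a b) \<Longrightarrow> K4 b"
  by (metis K4.A0 K4.MP)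

lemma K4_tautological_mp2: "K4 a \<Longrightarrow> K4 b \<Longrightarrow> tautology (Imp a (Imp b c)) \<Longrightarrow> K4 c"
  by (metis K4.A0 K4.MP)


section \<open>Maximal consistent sets\<close>

definition consistent :: "'p form set \<Rightarrow> bool" where
  "consistent X \<longleftrightarrow> \<not> (\<exists>as. set as \<subseteq> X \<and> K4 (Neg (conj_list as)))"

definition mcs :: "'p form set \<Rightarrow> bool" where
  "mcs M \<longleftrightarrow> consistent M \<and> (\<forall>X. consistent X \<longrightarrow> M \<subseteq> X \<longrightarrow> X = M)"

lemma inconsistent_insertE:
  assumes "\<not> consistent (insert c X)"
  obtains as where "set as \<subseteq> X" "K4 (Imp (conj_list as) (Neg c))"
proof -
  obtain bs where bs: "set bs \<subseteq> insert c X" "K4 (Neg (conj_list bs))"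
    using assms unfolding consistent_def by blast
  let ?as = "filter (\<lambda>x. x \<noteq> c) bs"
  have "K4 (Imp (conj_list ?as) (Neg c))"
    using bs(2) by (rule K4_tautological_mp) (auto simp: tautology_defs)
  moreover have "set ?as \<subseteq> X"
    using bs(1) by auto
  ultimately show thesis
    using that by blast
qed

lemma lindenbaum:
  assumes "consistent X"
  obtains M where "mcs M" "X \<subseteq> M"
proof -
  let ?A = "{Y. consistent Y \<and> X \<subseteq> Y}"
  have "\<exists>M\<in>?A. \<forall>Y\<in>?A. M \<subseteq> Y \<longrightarrow> Y = M"
  proof (rule subset_Zorn_nonempty)
    show "?A \<noteq> {}"
      using assms by blast
  next
    fix C assume C: "C \<noteq> {}" "subset.chain ?A C"
    have "consistent (\<Union>C)"
      unfolding consistent_def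
    proof
      assume "\<exists>as. set as \<subseteq> \<Union>C \<and> K4 (Neg (conj_list as))"
      then obtain as where as: "set as \<subseteq> \<Union>C" "K4 (Neg (conj_list as))"
        by blast
      obtain Y where "Y \<in> C" "set as \<subseteq> Y"
        using finite_subset_Union_chain[OF finite_set as(1) C] .
      moreover have "consistent Y" if "Y \<in> C" for Y
        using C(2) that unfolding subset.chain_def by blast
      ultimately show False
        using as(2) unfolding consistent_def by blast
    qed
    moreover have "X \<subseteq> \<Union>C"
      using C unfolding subset.chain_def by blast
    ultimately show "\<Union>C \<in> ?A"
      by blast
  qed
  then obtain M where "consistent M" "X \<subseteq> M" and maximal: "\<forall>Y\<in>?A. M \<subseteq> Y \<longrightarrow> Y = M"
    by blast
  moreover have "mcs M"
    unfolding mcs_def using \<open>consistent M\<close> \<open>X \<subseteq> M\<close> maximal by blast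
  ultimately show thesis
    using that by blast
qed

lemma mcs_closed:
  assumes M: "mcs M" and "set as \<subseteq> M" and "K4 (Imp (conj_list as) c)"
  shows "c \<in> M"
proof (rule ccontr)
  assume "c \<notin> M"
  then have "\<not> consistent (insert c M)"
    using M unfolding mcs_def by blast
  then obtain bs where bs: "set bs \<subseteq> M" "K4 (Imp (conj_list bs) (Neg c))"
    by (rule inconsistent_insertE)
  have "K4 (Neg (conj_list (bs @ as)))"
    using bs(2) assms(3) by (rule K4_tautological_mp2) (auto simp: tautology_defs)
  with bs(1) assms(2) M show False
    unfolding mcs_def consistent_def by auto
qed

lemma mcs_tautological:
  "mcs M \<Longrightarrow> set as \<subseteq> M \<Longrightarrow> tautology (Imp (conj_list as) c) \<Longrightarrow> c \<in> M"
  using mcs_closed K4.A0 by blast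

lemma mcs_theorem: "mcs M \<Longrightarrow> K4 c \<Longrightarrow> c \<in> M"
  by (rule mcs_closed[of M "[]"]) (auto elim: K4_tautological_mp simp: tautology_defs)

lemma mcs_Neg:
  assumes M: "mcs M"
  shows "Neg a \<in> M \<longleftrightarrow> a \<notin> M"
proof
  assume "Neg a \<in> M"
  show "a \<notin> M"
  proof
    assume "a \<in> M"
    with \<open>Neg a \<in> M\<close> have "set [a, Neg a] \<subseteq> M"
      by simp
    moreover have "K4 (Neg (conj_list [a, Neg a]))"
      by (rule K4.A0) (auto simp: tautology_defs)
    ultimately show False
      using M unfolding mcs_def consistent_def by blast
  qed
next
  assume "a \<notin> M"
  then have "\<not> consistent (insert a M)"
    using M unfolding mcs_def by blast
  then obtain as where "set as \<subseteq> M" "K4 (Imp (conj_list as) (Neg a))"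
    by (rule inconsistent_insertE)
  then show "Neg a \<in> M"
    using mcs_closed[OF M] by blast
qed

lemma mcs_Conj:
  assumes M: "mcs M"
  shows "Conj a b \<in> M \<longleftrightarrow> a \<in> M \<and> b \<in> M"
proof
  assume "Conj a b \<in> M"
  then show "a \<in> M \<and> b \<in> M"
    using mcs_tautological[OF M, of "[Conj a b]"] by (simp add: tautology_defs)
next
  assume "a \<in> M \<and> b \<in> M"
  then show "Conj a b \<in> M"
    by (intro mcs_tautological[OF M, of "[a, b]"]) (simp_all add: tautology_defs)
qed

lemma mcs_Imp: "mcs M \<Longrightarrow> Imp a b \<in> M \<longleftrightarrow> (a \<in> M \<longrightarrow> b \<in> M)"
  by (simp add: Imp_def mcs_Neg mcs_Conj)

lemma mcs_Disj: "mcs M \<Longrightarrow> Disj a b \<in> M \<longleftrightarrow> a \<in> M \<or> b \<in> M"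
  by (simp add: Disj_def mcs_Neg mcs_Conj)

lemma mcs_Iff: "mcs M \<Longrightarrow> Iff a b \<in> M \<longleftrightarrow> (a \<in> M \<longleftrightarrow> b \<in> M)"
  by (auto simp: Iff_def mcs_Imp mcs_Conj)

lemma mcs_Delta: "mcs M \<Longrightarrow> Delta a \<in> M \<longleftrightarrow> Nabla a \<notin> M"
  by (simp add: Delta_def mcs_Neg)

lemma mcs_Circ: "mcs M \<Longrightarrow> Circ a \<in> M \<longleftrightarrow> Bullet a \<notin> M"
  by (simp add: Circ_def mcs_Neg)

lemmas mcs_connectives = mcs_Neg mcs_Conj mcs_Imp mcs_Disj mcs_Iff mcs_Delta mcs_Circ

lemma mcs_Nabla_cong:
  assumes "mcs M" "K4 (Iff a b)"
  shows "Nabla a \<in> M \<longleftrightarrow> Nabla b \<in> M"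
  using mcs_theorem[OF assms(1) K4.R3[OF assms(2)]] by (simp add: mcs_connectives[OF assms(1)])

lemma mcs_Bullet_cong:
  assumes "mcs M" "K4 (Iff a b)"
  shows "Bullet a \<in> M \<longleftrightarrow> Bullet b \<in> M"
  using mcs_theorem[OF assms(1) K4.R4[OF assms(2)]] by (simp add: mcs_connectives[OF assms(1)])


section \<open>The canonical relation\<close>

definition canonical_core :: "'p form set \<Rightarrow> 'p form \<Rightarrow> 'p form set" where
  "canonical_core G \<psi> = {a. Delta a \<in> G \<and> Circ (Imp (Neg \<psi>) a) \<in> G}"

definition canonical_rel :: "'p form set \<Rightarrow> 'p form set \<Rightarrow> bool" where
  "canonical_rel G D \<longleftrightarrow> (\<exists>\<psi>. Bullet \<psi> \<in> G \<and> canonical_core G \<psi> \<subseteq> D)"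

lemma Verum_in_canonical_core:
  assumes "mcs G"
  shows "Verum \<in> canonical_core G \<psi>"
proof -
  have "K4 (Delta Verum)" "K4 (Circ (Imp (Neg \<psi>) Verum))"
    by (rule K4.R1 K4.R2, rule K4.A0, simp add: tautology_defs)+
  then show ?thesis
    unfolding canonical_core_def using mcs_theorem[OF assms] by blast
qed

lemma Conj_in_canonical_core:
  assumes M: "mcs G" and "a \<in> canonical_core G \<psi>" "b \<in> canonical_core G \<psi>"
  shows "Conj a b \<in> canonical_core G \<psi>"
proof -
  let ?ka = "Imp (Neg \<psi>) a" and ?kb = "Imp (Neg \<psi>) b"
  have a: "Nabla a \<notin> G" "Bullet ?ka \<notin> G" and b: "Nabla b \<notin> G" "Bullet ?kb \<notin> G"
    using assms by (simp_all add: canonical_core_def mcs_connectives[OF M])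
  have "Nabla (Conj a b) \<notin> G"
    using mcs_theorem[OF M K4.A4[of a b]] a b by (simp add: mcs_connectives[OF M])
  moreover have "Bullet (Conj ?ka ?kb) \<notin> G"
    using mcs_theorem[OF M K4.A5[of ?ka ?kb]] a b by (simp add: mcs_connectives[OF M])
  moreover have "Bullet (Imp (Neg \<psi>) (Conj a b)) \<in> G \<longleftrightarrow> Bullet (Conj ?ka ?kb) \<in> G"
    by (rule mcs_Bullet_cong[OF M K4.A0]) (auto simp: tautology_defs)
  ultimately show ?thesis
    by (simp add: canonical_core_def mcs_connectives[OF M])
qed

lemma conj_list_in_canonical_core:
  "mcs G \<Longrightarrow> set as \<subseteq> canonical_core G \<psi> \<Longrightarrow> conj_list as \<in> canonical_core G \<psi>"
  by (induction as) (simp_all add: Verum_in_canonical_core Conj_in_canonical_core)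

text \<open>The core does not depend on the witness \<psi>: this is what makes the successors of a
  state agree on every non-contingent formula.\<close>

lemma canonical_core_subset:
  assumes M: "mcs G" and \<psi>: "Bullet \<psi> \<in> G"
  shows "canonical_core G \<psi> \<subseteq> canonical_core G \<chi>"
proof
  fix a assume "a \<in> canonical_core G \<psi>"
  then have a: "Nabla a \<notin> G" "Bullet (Imp (Neg \<psi>) a) \<notin> G"
    by (simp_all add: canonical_core_def mcs_connectives[OF M])
  have "Bullet \<psi> \<in> G \<longleftrightarrow> Bullet (Conj (Imp a \<psi>) (Imp (Neg a) \<psi>)) \<in> G"
    by (rule mcs_Bullet_cong[OF M K4.A0]) (auto simp: tautology_defs)
  then have "Bullet (Imp a \<psi>) \<in> G \<or> Bullet (Imp (Neg a) \<psi>) \<in> G"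
    using \<psi> mcs_theorem[OF M K4.A5[of "Imp a \<psi>" "Imp (Neg a) \<psi>"]]
    by (simp add: mcs_connectives[OF M])
  moreover have "Bullet (Imp (Neg a) \<psi>) \<in> G \<longleftrightarrow> Bullet (Imp (Neg \<psi>) a) \<in> G"
    by (rule mcs_Bullet_cong[OF M K4.A0]) (auto simp: tautology_defs)
  ultimately have "Bullet (Imp a \<psi>) \<in> G"
    using a(2) by blast
  then have "Bullet (Imp (Neg a) \<chi>) \<notin> G"
    using a(1) mcs_theorem[OF M K4.A7[of a \<psi> \<chi>]] by (simp add: mcs_connectives[OF M])
  moreover have "Bullet (Imp (Neg a) \<chi>) \<in> G \<longleftrightarrow> Bullet (Imp (Neg \<chi>) a) \<in> G"
    by (rule mcs_Bullet_cong[OF M K4.A0]) (auto simp: tautology_defs)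
  ultimately show "a \<in> canonical_core G \<chi>"
    using a(1) by (simp add: canonical_core_def mcs_connectives[OF M])
qed

lemma canonical_core_cases:
  assumes M: "mcs G" and "Delta a \<in> G"
  shows "a \<in> canonical_core G \<psi> \<or> Neg a \<in> canonical_core G \<psi>"
proof -
  have "Bullet (Imp a \<psi>) \<notin> G \<or> Bullet (Imp (Neg a) \<psi>) \<notin> G"
    using assms mcs_theorem[OF M K4.A7[of a \<psi> \<psi>]] by (simp add: mcs_connectives[OF M])
  moreover have "Bullet (Imp a \<psi>) \<in> G \<longleftrightarrow> Bullet (Imp (Neg \<psi>) (Neg a)) \<in> G"
    by (rule mcs_Bullet_cong[OF M K4.A0]) (auto simp: tautology_defs)
  moreover have "Bullet (Imp (Neg a) \<psi>) \<in> G \<longleftrightarrow> Bullet (Imp (Neg \<psi>) a) \<in> G"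
    by (rule mcs_Bullet_cong[OF M K4.A0]) (auto simp: tautology_defs)
  moreover have "Delta (Neg a) \<in> G"
    using assms mcs_theorem[OF M K4.A2[of a]] by (simp add: mcs_connectives[OF M])
  ultimately show ?thesis
    using assms(2) by (auto simp: canonical_core_def mcs_connectives[OF M])
qed

lemma canonical_core_if_not_Bullet:
  assumes M: "mcs G" and "a \<in> G" "Bullet a \<notin> G"
  shows "a \<in> canonical_core G \<psi>"
proof -
  have "Nabla a \<notin> G"
    using assms mcs_theorem[OF M K4.A6[of a]] mcs_theorem[OF M K4.A1[of "Neg a"]]
    by (simp add: mcs_connectives[OF M])
  moreover have "Bullet (Imp (Neg \<psi>) a) \<notin> G"
    using assms mcs_theorem[OF M K4.A3[of "Neg \<psi>" a]] by (simp add: mcs_connectives[OF M])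
  ultimately show ?thesis
    by (simp add: canonical_core_def mcs_connectives[OF M])
qed

lemma Delta_in_canonical_core:
  assumes M: "mcs G" and "a \<in> canonical_core G \<psi>"
  shows "Delta a \<in> canonical_core G \<psi>"
  using assms mcs_theorem[OF M K4.A4_1[of a]] mcs_theorem[OF M K4.A4_2[of a "Neg \<psi>"]]
  by (simp add: canonical_core_def mcs_connectives[OF M])

lemma Circ_in_canonical_core:
  assumes M: "mcs G" and "Bullet \<psi> \<in> G" "a \<in> canonical_core G \<psi>"
  shows "Circ (Imp (Neg \<chi>) a) \<in> canonical_core G \<psi>"
  using assms mcs_theorem[OF M K4.A4_3[of \<psi> a \<chi>]] mcs_theorem[OF M K4.A4_4[of \<psi> a \<chi>]]
  by (simp add: canonical_core_def mcs_connectives[OF M])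

lemma canonical_rel_trans:
  assumes M: "mcs G" and "canonical_rel G D" "canonical_rel D E"
  shows "canonical_rel G E"
proof -
  obtain \<psi> where \<psi>: "Bullet \<psi> \<in> G" "canonical_core G \<psi> \<subseteq> D"
    using assms(2) unfolding canonical_rel_def by blast
  obtain \<chi> where \<chi>: "canonical_core D \<chi> \<subseteq> E"
    using assms(3) unfolding canonical_rel_def by blast
  have "canonical_core G \<psi> \<subseteq> E"
  proof
    fix a assume "a \<in> canonical_core G \<psi>"
    then have "Delta a \<in> D" "Circ (Imp (Neg \<chi>) a) \<in> D"
      using \<psi> Delta_in_canonical_core[OF M] Circ_in_canonical_core[OF M] by blast+
    then show "a \<in> E"
      using \<chi> unfolding canonical_core_def by blast
  qed
  with \<psi>(1) show ?thesis
    unfolding canonical_rel_def by blast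
qed

lemma canonical_successor:
  assumes M: "mcs G" and "Bullet \<psi> \<in> G"
    and no_refutation: "\<And>a. a \<in> canonical_core G \<psi> \<Longrightarrow> K4 (Imp a (Neg c)) \<Longrightarrow> False"
  shows "\<exists>D. mcs D \<and> canonical_rel G D \<and> c \<in> D"
proof -
  have "consistent (insert c (canonical_core G \<psi>))"
  proof (rule ccontr)
    assume "\<not> consistent (insert c (canonical_core G \<psi>))"
    then obtain as where "set as \<subseteq> canonical_core G \<psi>" "K4 (Imp (conj_list as) (Neg c))"
      by (rule inconsistent_insertE)
    then show False
      using no_refutation conj_list_in_canonical_core[OF M] by blast
  qed
  then obtain D where "mcs D" "insert c (canonical_core G \<psi>) \<subseteq> D"
    by (rule lindenbaum)
  with assms(2) show ?thesis
    unfolding canonical_rel_def by blast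
qed

lemma canonical_successor_refuting:
  assumes M: "mcs G" and c: "Bullet c \<in> G"
  shows "\<exists>D. mcs D \<and> canonical_rel G D \<and> Neg c \<in> D"
proof (rule canonical_successor[OF M c])
  fix a assume a: "a \<in> canonical_core G c" and "K4 (Imp a (Neg (Neg c)))"
  have "K4 (Iff (Imp (Neg c) a) c)"
    using \<open>K4 (Imp a (Neg (Neg c)))\<close> by (rule K4_tautological_mp) (auto simp: tautology_defs)
  with a c show False
    using mcs_Bullet_cong[OF M] by (simp add: canonical_core_def mcs_connectives[OF M])
qed

lemma canonical_successor_satisfying:
  assumes M: "mcs G" and c: "Bullet c \<in> G" and "Nabla c \<in> G"
  shows "\<exists>D. mcs D \<and> canonical_rel G D \<and> c \<in> D"
proof (rule canonical_successor[OF M c])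
  fix a assume "a \<in> canonical_core G c" and "K4 (Imp a (Neg c))"
  let ?k = "Imp (Neg c) a"
  have a: "Nabla a \<notin> G" "Bullet ?k \<notin> G"
    using \<open>a \<in> canonical_core G c\<close> by (simp_all add: canonical_core_def mcs_connectives[OF M])
  have "K4 (Iff c (Conj ?k (Neg a)))"
    using \<open>K4 (Imp a (Neg c))\<close> by (rule K4_tautological_mp) (auto simp: tautology_defs)
  then have "Nabla (Conj ?k (Neg a)) \<in> G"
    using assms(3) mcs_Nabla_cong[OF M] by blast
  then have "Nabla ?k \<in> G \<or> Nabla (Neg a) \<in> G"
    using mcs_theorem[OF M K4.A4[of ?k "Neg a"]] by (simp add: mcs_connectives[OF M])
  moreover have "Nabla (Neg a) \<notin> G"
    using a(1) mcs_theorem[OF M K4.A2[of a]] by (simp add: mcs_connectives[OF M])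
  moreover have "c \<in> G"
    using c mcs_theorem[OF M K4.A1[of c]] by (simp add: mcs_connectives[OF M])
  ultimately show False
    using a(2) mcs_theorem[OF M K4.A6[of ?k]] mcs_theorem[OF M K4.A1[of "Neg ?k"]]
    by (simp add: mcs_connectives[OF M])
qed

lemma mcs_Bullet_iff:
  assumes M: "mcs G"
  shows "Bullet a \<in> G \<longleftrightarrow> a \<in> G \<and> (\<exists>D. mcs D \<and> canonical_rel G D \<and> a \<notin> D)"
proof
  assume b: "Bullet a \<in> G"
  then have "a \<in> G"
    using mcs_theorem[OF M K4.A1[of a]] by (simp add: mcs_connectives[OF M])
  with canonical_successor_refuting[OF M b] show "a \<in> G \<and> (\<exists>D. mcs D \<and> canonical_rel G D \<and> a \<notin> D)"
    using mcs_Neg by blast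
next
  assume "a \<in> G \<and> (\<exists>D. mcs D \<and> canonical_rel G D \<and> a \<notin> D)"
  then obtain D \<psi> where "a \<in> G" "canonical_core G \<psi> \<subseteq> D" "a \<notin> D"
    unfolding canonical_rel_def by blast
  then show "Bullet a \<in> G"
    using canonical_core_if_not_Bullet[OF M] by blast
qed

lemma mcs_Nabla_iff:
  assumes M: "mcs G"
  shows "Nabla a \<in> G \<longleftrightarrow>
    (\<exists>D D'. mcs D \<and> mcs D' \<and> canonical_rel G D \<and> canonical_rel G D' \<and> a \<in> D \<and> a \<notin> D')"
    (is "_ \<longleftrightarrow> ?splits")
proof
  assume n: "Nabla a \<in> G"
  then have "Bullet a \<in> G \<or> Bullet (Neg a) \<in> G"
    using mcs_theorem[OF M K4.A6[of a]] by (simp add: mcs_connectives[OF M])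
  then show ?splits
  proof
    assume "Bullet a \<in> G"
    with canonical_successor_satisfying[OF M _ n] canonical_successor_refuting[OF M]
    show ?splits
      using mcs_Neg by blast
  next
    assume b: "Bullet (Neg a) \<in> G"
    moreover have "Nabla (Neg a) \<in> G"
      using n mcs_theorem[OF M K4.A2[of a]] by (simp add: mcs_connectives[OF M])
    ultimately show ?splits
      using canonical_successor_satisfying[OF M] canonical_successor_refuting[OF M b] mcs_Neg
      by metis
  qed
next
  assume ?splits
  then obtain D D' \<psi> where D: "mcs D" "a \<in> D" "a \<notin> D'"
    and \<psi>: "Bullet \<psi> \<in> G" "canonical_core G \<psi> \<subseteq> D"
    and D': "canonical_rel G D'"
    unfolding canonical_rel_def by blast
  have "canonical_core G \<psi> \<subseteq> D'"
    using D' canonical_core_subset[OF M \<psi>(1)] unfolding canonical_rel_def by blast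
  show "Nabla a \<in> G"
  proof (rule ccontr)
    assume "Nabla a \<notin> G"
    then have "a \<in> canonical_core G \<psi> \<or> Neg a \<in> canonical_core G \<psi>"
      using canonical_core_cases[OF M] mcs_Delta[OF M] by blast
    with D \<psi>(2) \<open>canonical_core G \<psi> \<subseteq> D'\<close> show False
      using mcs_Neg[OF D(1)] by blast
  qed
qed


section \<open>The canonical model\<close>

text \<open>The theorem quantifies over models whose states have type \<open>'p form set set\<close>, so a
  maximal consistent set G is represented by the state {G}.\<close>

definition canonical_states :: "'p form set set set" where
  "canonical_states = {{G} | G. mcs G}"

definition canonical_R :: "'p form set set \<Rightarrow> 'p form set set \<Rightarrow> bool" where
  "canonical_R X Y \<longleftrightarrow> (\<exists>G D. X = {G} \<and> Y = {D} \<and> mcs G \<and> mcs D \<and> canonical_rel G D)"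

definition canonical_V :: "'p \<Rightarrow> 'p form set set set" where
  "canonical_V p = {{G} | G. mcs G \<and> Atom p \<in> G}"

lemma bex_canonical_states: "(\<exists>X\<in>canonical_states. P X) \<longleftrightarrow> (\<exists>D. mcs D \<and> P {D})"
  unfolding canonical_states_def by auto

lemma canonical_R_singleton: "canonical_R {G} {D} \<longleftrightarrow> mcs G \<and> mcs D \<and> canonical_rel G D"
  unfolding canonical_R_def by auto

lemma canonical_truth:
  "mcs G \<Longrightarrow> sat canonical_states canonical_R canonical_V {G} a \<longleftrightarrow> a \<in> G"
proof (induction a arbitrary: G)
  case (Atom p)
  then show ?case by (auto simp: canonical_V_def)
next
  case (Neg a)
  then show ?case by (simp add: mcs_Neg)
next
  case (Conj a b)
  then show ?case by (simp add: mcs_Conj)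
next
  case (Nabla a)
  then show ?case
    by (auto simp: mcs_Nabla_iff bex_canonical_states canonical_R_singleton)
next
  case (Bullet a)
  then show ?case
    by (auto simp: mcs_Bullet_iff bex_canonical_states canonical_R_singleton)
qed

lemma canonical_model_is_model:
  fixes M :: "'p form set"
  assumes "mcs M"
  shows "is_model canonical_states canonical_R (canonical_V :: 'p \<Rightarrow> _)"
  using assms unfolding is_model_def canonical_states_def canonical_R_def canonical_V_def by auto

lemma canonical_model_transitive: "transitive_rel canonical_states canonical_R"
  unfolding transitive_rel_def
proof (intro ballI impI)
  fix X Y Z assume "canonical_R X Y" "canonical_R Y Z"
  then obtain G D E where "X = {G}" "Z = {E}" "mcs G" "mcs E"
    and "canonical_rel G D" "canonical_rel D E"
    unfolding canonical_R_def by auto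
  then show "canonical_R X Z"
    unfolding canonical_R_def using canonical_rel_trans by blast
qed

lemma consistent_insert_Neg_if_not_derives:
  assumes "\<not> derives X a"
  shows "consistent (insert (Neg a) X)"
proof (rule ccontr)
  assume "\<not> consistent (insert (Neg a) X)"
  then obtain as where as: "set as \<subseteq> X" "K4 (Imp (conj_list as) (Neg (Neg a)))"
    by (rule inconsistent_insertE)
  show False
  proof (cases as)
    case Nil
    have "K4 a"
      using as(2) by (rule K4_tautological_mp) (simp add: Nil tautology_defs)
    with assms show False
      unfolding derives_def by blast
  next
    case (Cons b bs)
    have "K4 (Imp (fold (\<lambda>x y. Conj y x) bs b) a)"
      using as(2) by (rule K4_tautological_mp) (auto simp: Cons tautology_defs)
    with assms as(1) show False
      unfolding derives_def Cons by blast
  qed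
qed

theorem theorem3:
  fixes G :: "'p form set" and phi :: "'p form"
  assumes "\<forall>(S :: 'p form set set set) R V s.
             is_model S R V \<and> transitive_rel S R \<and> s \<in> S \<and> (\<forall>g\<in>G. sat S R V s g)
             \<longrightarrow> sat S R V s phi"
  shows "derives G phi"
proof (rule ccontr)
  assume "\<not> derives G phi"
  then obtain M where M: "mcs M" "insert (Neg phi) G \<subseteq> M"
    using consistent_insert_Neg_if_not_derives lindenbaum by metis
  have "{M} \<in> canonical_states"
    using M(1) unfolding canonical_states_def by blast
  then have "sat canonical_states canonical_R canonical_V {M} phi"
    using assms canonical_model_is_model[OF M(1)] canonical_model_transitive
      canonical_truth[OF M(1)] M(2) by blast
  with M show False
    using canonical_truth mcs_Neg by blast
qed

end
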